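(* Let $f:\mathbb{R}^n\to\mathbb{R}\cup\{+\infty\}$ be a closed proper convex function and $x^*\in\arg\min_x f(x)$. Let $(A_k),(a_k),(b_k),(c_k)$, $k\geqslant0$, be real sequences with $a_k>0$, $c_k>0$ for all $k$, $b_k>0$ for $k\geqslant1$, satisfying $$A_k=a_kb_k,\quad A_{k+1}-A_k\leqslant a_k,\quad a_k\leqslant c_k,\quad A_0=b_0=0.$$ Let $x_0\in\mathbb{R}^n$, $z_0=x_0$, and for $k\geqslant0$ $$y_{k+1}=\frac{1}{b_k+1}z_k+\frac{b_k}{b_k+1}x_k,\qquad x_{k+1}=\mathrm{prox}_{\frac{c_k}{b_k+1}f}(y_{k+1}),\qquad z_{k+1}=z_k+\frac{a_k}{c_k}(b_k+1)(x_{k+1}-y_{k+1}).$$ Then for every $k\geqslant1$, $$f(x_k)-f(x^* )\leqslant\frac{\|x_0-x^*\|^2}{2A_k},$$ and for every $k\geqslant0$, $$\min_{0\leqslant j\leqslant k}\Big\|\frac{(b_j+1)x_{j+1}-b_jx_j-z_j}{c_j}\Big\|^2\leqslant\frac{\|x_0-x^*\|^2}{\sum_{j=0}^ka_j^2}.$$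
   Context: For $\gamma>0$, $\mathrm{prox}_{\gamma f}(y)=\arg\min_x\{f(x)+\frac{1}{2\gamma}\|x-y\|^2\}$. $\|\cdot\|$ is the Euclidean norm. *)

theory Defs
  imports "HOL-Analysis.Analysis"
begin

definition proper_fun :: "('a \<Rightarrow> ereal) \<Rightarrow> bool" where
  "proper_fun f \<longleftrightarrow> (\<forall>x. f x \<noteq> -\<infinity>) \<and> (\<exists>x. f x \<noteq> \<infinity>)"

definition convex_fun :: "('a::real_vector \<Rightarrow> ereal) \<Rightarrow> bool" where
  "convex_fun f \<longleftrightarrow> (\<forall>x y t. 0 < t \<and> t < 1 \<longrightarrow>
      f ((1 - t) *\<^sub>R x + t *\<^sub>R y) \<le> ereal (1 - t) * f x + ereal t * f y)"

definition closed_fun :: "('a::topological_space \<Rightarrow> ereal) \<Rightarrow> bool" where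
  "closed_fun f \<longleftrightarrow> closed {(x, r::real). f x \<le> ereal r}"

definition prox :: "real \<Rightarrow> ('a::real_normed_vector \<Rightarrow> ereal) \<Rightarrow> 'a \<Rightarrow> 'a" where
  "prox \<gamma> f y = (SOME x. \<forall>u. f x + ereal ((norm (x - y))\<^sup>2 / (2 * \<gamma>))
                           \<le> f u + ereal ((norm (u - y))\<^sup>2 / (2 * \<gamma>)))"

end

(*
  The prox step x(k+1) = prox (\<gamma>k) f (y(k+1)), \<gamma>k = c k / (b k + 1), produces the subgradient
  g k = (y(k+1) - x(k+1)) / \<gamma>k of f at x(k+1), and the updates read
  c k g k = z k + b k x k - (b k + 1) x(k+1) and z(k+1) = z k - a k g k.
  The potential E k = A k (f(x k) - f(xs)) + |z k - xs|^2 / 2 then decreases by at least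
  a k^2 |g k|^2 / 2 in every step: expanding |z(k+1) - xs|^2, the cross term is paid for by the
  subgradient inequality at xs (weight a k) and at x k (weight A k), and a k <= c k absorbs the
  quadratic term.  Telescoping from E 0 = |x0 - xs|^2 / 2 gives both bounds, since
  (b k + 1) x(k+1) - b k x k - z k = - c k g k.
*)
theory Submission
  imports Defs
begin

definition prox_minimizer :: "real \<Rightarrow> ('a::real_normed_vector \<Rightarrow> ereal) \<Rightarrow> 'a \<Rightarrow> 'a \<Rightarrow> bool" where
  "prox_minimizer \<gamma> f y p \<longleftrightarrow>
     (\<forall>u. f p + ereal ((norm (p - y))\<^sup>2 / (2 * \<gamma>)) \<le> f u + ereal ((norm (u - y))\<^sup>2 / (2 * \<gamma>)))"

lemma prox_minimizer_prox:
  assumes "\<exists>p. prox_minimizer \<gamma> f y p"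
  shows "prox_minimizer \<gamma> f y (prox \<gamma> f y)"
  using someI_ex[OF assms] unfolding prox_def prox_minimizer_def .

lemma compact_epigraph_Int_cball_Times:
  fixes f :: "'a::heine_borel \<Rightarrow> ereal"
  assumes "closed_fun f"
  shows "compact ({(u, r). f u \<le> ereal r} \<inter> cball y R \<times> {l..h})"
  using assms unfolding closed_fun_def
  by (intro closed_Int_compact compact_Times compact_cball compact_Icc)

lemma prox_minimizer_exists:
  fixes f :: "'a::euclidean_space \<Rightarrow> ereal"
  assumes "closed_fun f" and lower: "\<And>u. ereal l \<le> f u" and "f w < \<infinity>" and "\<gamma> > 0"
  shows "\<exists>p. prox_minimizer \<gamma> f y p"
proof -
  define q where "q u = (norm (u - y))\<^sup>2 / (2 * \<gamma>)" for u
  have q_nonneg: "q u \<ge> 0" for u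
    using \<open>\<gamma> > 0\<close> unfolding q_def by simp
  obtain fw where fw: "f w = ereal fw"
    using lower[of w] \<open>f w < \<infinity>\<close> by (cases "f w") auto
  define h where "h = fw + q w"
  \<comment> \<open>Minimise r + q u over the compact part of the epigraph on which it can beat its value at w.\<close>
  define K where "K = {(u, r). f u \<le> ereal r} \<inter> cball y (sqrt (2 * \<gamma> * (h - l))) \<times> {l..h}"
  have in_cball: "dist y u \<le> sqrt (2 * \<gamma> * (h - l))" if "q u \<le> h - l" for u
  proof -
    have "(norm (u - y))\<^sup>2 \<le> 2 * \<gamma> * (h - l)"
      using that \<open>\<gamma> > 0\<close> unfolding q_def by (simp add: field_simps)
    then show ?thesis
      by (simp add: dist_norm norm_minus_commute real_le_rsqrt)
  qed
  have "compact K"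
    unfolding K_def using \<open>closed_fun f\<close> by (rule compact_epigraph_Int_cball_Times)
  moreover have "(w, fw) \<in> K"
    using lower[of w] fw q_nonneg[of w] in_cball[of w] unfolding K_def h_def by simp
  moreover have "continuous_on K (\<lambda>(u, r). r + q u)"
    unfolding q_def case_prod_unfold using \<open>\<gamma> > 0\<close> by (intro continuous_intros) auto
  ultimately obtain u0 r0 where "(u0, r0) \<in> K" and min_K: "\<And>u r. (u, r) \<in> K \<Longrightarrow> r0 + q u0 \<le> r + q u"
    using continuous_attains_inf[of K "\<lambda>(u, r). r + q u"] by fastforce
  have below_u0: "f u0 + ereal (q u0) \<le> ereal (r0 + q u0)"
  proof -
    have "f u0 \<le> ereal r0"
      using \<open>(u0, r0) \<in> K\<close> unfolding K_def by simp
    then show ?thesis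
      by (metis add_right_mono plus_ereal.simps(1))
  qed
  have "r0 + q u0 \<le> h"
    using min_K[OF \<open>(w, fw) \<in> K\<close>] unfolding h_def by simp
  have "f u0 + ereal (q u0) \<le> f u + ereal (q u)" for u
  proof (cases "ereal h \<le> f u + ereal (q u)")
    case True
    then show ?thesis
      using below_u0 \<open>r0 + q u0 \<le> h\<close> by (meson ereal_less_eq(3) order_trans)
  next
    case False
    then obtain r where r: "f u = ereal r" and "r + q u < h"
      using lower[of u] by (cases "f u") auto
    then have "(u, r) \<in> K"
      using lower[of u] q_nonneg[of u] in_cball[of u] unfolding K_def by simp
    then show ?thesis
      using below_u0 min_K r by (metis ereal_less_eq(3) order_trans plus_ereal.simps(1))
  qed
  then show ?thesis
    unfolding prox_minimizer_def q_def by blast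
qed

lemma nonpos_if_le_mult_small:
  fixes d c :: real
  assumes "\<And>t. 0 < t \<Longrightarrow> t < 1 \<Longrightarrow> d \<le> t * c"
  shows "d \<le> 0"
proof (rule tendsto_lowerbound)
  show "((\<lambda>t. t * c) \<longlongrightarrow> 0) (at_right 0)"
    by (auto intro!: tendsto_eq_intros)
  show "\<forall>\<^sub>F t in at_right 0. d \<le> t * c"
    using eventually_at_right_real[of 0 1] by (rule eventually_mono) (use assms in auto)
qed simp

lemma power2_norm_add_scaleR:
  fixes a b :: "'a::real_inner"
  shows "(norm (a + t *\<^sub>R b))\<^sup>2 = (norm a)\<^sup>2 + 2 * t * inner a b + t\<^sup>2 * (norm b)\<^sup>2"
  unfolding power2_norm_eq_inner
  by (simp add: inner_add_left inner_add_right inner_commute algebra_simps power2_eq_square)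

lemma convex_fun_finite_combination:
  assumes "convex_fun f" and "f p = ereal fp" and "f u = ereal fu" and "0 < t" and "t < 1"
  shows "f ((1 - t) *\<^sub>R p + t *\<^sub>R u) \<le> ereal ((1 - t) * fp + t * fu)"
proof -
  have "f ((1 - t) *\<^sub>R p + t *\<^sub>R u) \<le> ereal (1 - t) * f p + ereal t * f u"
    using assms unfolding convex_fun_def by blast
  then show ?thesis
    using assms by simp
qed

lemma prox_minimizer_subgradient:
  fixes f :: "'a::real_inner \<Rightarrow> ereal"
  assumes "convex_fun f" and "\<gamma> > 0" and "prox_minimizer \<gamma> f y p"
    and fp: "f p = ereal fp" and fu: "f u = ereal fu"
  shows "fp + inner ((1 / \<gamma>) *\<^sub>R (y - p)) (u - p) \<le> fu"
proof -
  \<comment> \<open>Compare p with the points (1 - t) p + t u of the segment towards u and let t tend to 0.\<close>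
  have "fp - fu - inner (p - y) (u - p) / \<gamma> \<le> t * ((norm (u - p))\<^sup>2 / (2 * \<gamma>))"
    if "0 < t" "t < 1" for t
  proof -
    define v where "v = (1 - t) *\<^sub>R p + t *\<^sub>R u"
    have "ereal (fp + (norm (p - y))\<^sup>2 / (2 * \<gamma>)) \<le> f v + ereal ((norm (v - y))\<^sup>2 / (2 * \<gamma>))"
      using \<open>prox_minimizer \<gamma> f y p\<close> fp unfolding prox_minimizer_def by (metis plus_ereal.simps(1))
    also have "\<dots> \<le> ereal ((1 - t) * fp + t * fu + (norm (v - y))\<^sup>2 / (2 * \<gamma>))"
      using convex_fun_finite_combination[OF \<open>convex_fun f\<close> fp fu that] unfolding v_def
      by (metis add_right_mono plus_ereal.simps(1))
    finally have "fp + (norm (p - y))\<^sup>2 / (2 * \<gamma>) \<le> (1 - t) * fp + t * fu + (norm (v - y))\<^sup>2 / (2 * \<gamma>)"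
      by simp
    moreover have "(norm (v - y))\<^sup>2 = (norm (p - y))\<^sup>2 + 2 * t * inner (p - y) (u - p) + t\<^sup>2 * (norm (u - p))\<^sup>2"
    proof -
      have "v - y = (p - y) + t *\<^sub>R (u - p)"
        unfolding v_def by (simp add: algebra_simps)
      then show ?thesis
        by (simp only: power2_norm_add_scaleR)
    qed
    moreover have "((norm (p - y))\<^sup>2 + 2 * t * inner (p - y) (u - p) + t\<^sup>2 * (norm (u - p))\<^sup>2) / (2 * \<gamma>)
        = (norm (p - y))\<^sup>2 / (2 * \<gamma>) + t * (inner (p - y) (u - p) / \<gamma>)
          + t * (t * ((norm (u - p))\<^sup>2 / (2 * \<gamma>)))"
      using \<open>\<gamma> > 0\<close> by (simp add: field_simps power2_eq_square)
    ultimately have "t * (fp - fu - inner (p - y) (u - p) / \<gamma>) \<le> t * (t * ((norm (u - p))\<^sup>2 / (2 * \<gamma>)))"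
      by (simp add: algebra_simps)
    then show ?thesis
      using \<open>0 < t\<close> by (simp only: mult_le_cancel_left_pos)
  qed
  then have "fp - fu - inner (p - y) (u - p) / \<gamma> \<le> 0"
    by (rule nonpos_if_le_mult_small)
  moreover have "inner ((1 / \<gamma>) *\<^sub>R (y - p)) (u - p) = - inner (p - y) (u - p) / \<gamma>"
    by (simp add: inner_diff_left)
  ultimately show ?thesis
    by linarith
qed

lemma potential_decrease_step:
  fixes g xk xk1 zk zk1 xs :: "'a::real_inner"
  assumes "0 < ak" and "0 \<le> bk" and "ak \<le> ck" and Ak: "Ak = ak * bk" and "Ak1 - Ak \<le> ak"
    and g: "ck *\<^sub>R g = zk + bk *\<^sub>R xk - (bk + 1) *\<^sub>R xk1"
    and z: "zk1 = zk - ak *\<^sub>R g"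
    and at_min: "Fk1 + inner g (xs - xk1) \<le> fs"
    and at_prev: "0 < Ak \<Longrightarrow> Fk1 + inner g (xk - xk1) \<le> Fk"
    and "fs \<le> Fk1"
  shows "Ak1 * (Fk1 - fs) + (norm (zk1 - xs))\<^sup>2 / 2 + ak\<^sup>2 * (norm g)\<^sup>2 / 2
    \<le> Ak * (Fk - fs) + (norm (zk - xs))\<^sup>2 / 2"
proof -
  define N where "N = (norm g)\<^sup>2"
  define I_prev where "I_prev = inner g (xk1 - xk)"
  define I_min where "I_min = inner g (xk1 - xs)"
  have "zk - xs = ck *\<^sub>R g + bk *\<^sub>R (xk1 - xk) + (xk1 - xs)"
    using g by (simp add: algebra_simps)
  then have "inner g (zk - xs) = ck * N + bk * I_prev + I_min"
    unfolding N_def I_prev_def I_min_def power2_norm_eq_inner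
    by (simp only: inner_add_right inner_scaleR_right)
  then have norm_z: "(norm (zk1 - xs))\<^sup>2
      = (norm (zk - xs))\<^sup>2 - 2 * (ak * ck * N) - 2 * (Ak * I_prev) - 2 * (ak * I_min) + ak\<^sup>2 * N"
    using power2_norm_add_scaleR[of "zk - xs" "- ak" g] unfolding z N_def Ak
    by (simp add: algebra_simps inner_commute)
  have "ak * (Fk1 - fs) \<le> ak * I_min"
    using at_min \<open>0 < ak\<close> unfolding I_min_def by (simp add: inner_diff_right)
  moreover have "Ak * (Fk1 - Fk) \<le> Ak * I_prev"
  proof (cases "0 < Ak")
    case True
    then show ?thesis
      using at_prev unfolding I_prev_def by (simp add: inner_diff_right)
  next
    case False
    then have "Ak = 0"
      using \<open>0 < ak\<close> \<open>0 \<le> bk\<close> unfolding Ak by (simp add: zero_less_mult_iff)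
    then show ?thesis
      by simp
  qed
  moreover have "Ak1 * (Fk1 - fs) \<le> (Ak + ak) * (Fk1 - fs)"
    using \<open>Ak1 - Ak \<le> ak\<close> \<open>fs \<le> Fk1\<close> by (intro mult_right_mono) auto
  moreover have "ak\<^sup>2 * N \<le> ak * ck * N"
    using \<open>0 < ak\<close> \<open>ak \<le> ck\<close> unfolding N_def power2_eq_square by (intro mult_right_mono) auto
  ultimately show ?thesis
    unfolding norm_z N_def[symmetric] by (simp add: field_simps)
qed

lemma telescope_decrease:
  fixes E d :: "nat \<Rightarrow> real"
  assumes "\<And>k. E (Suc k) + d k \<le> E k"
  shows "E n + (\<Sum>k<n. d k) \<le> E 0"
  using assms by (induction n) (auto intro: order_trans[rotated])

lemma Min_image_le_weighted_bound:
  fixes t w :: "'i \<Rightarrow> real"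
  assumes "finite I" and "I \<noteq> {}" and "\<And>i. i \<in> I \<Longrightarrow> 0 < w i"
    and "(\<Sum>i\<in>I. w i * t i) \<le> B"
  shows "Min (t ` I) \<le> B / sum w I"
proof -
  have "sum w I * Min (t ` I) = (\<Sum>i\<in>I. w i * Min (t ` I))"
    by (rule sum_distrib_right)
  also have "\<dots> \<le> (\<Sum>i\<in>I. w i * t i)"
    using assms by (intro sum_mono mult_left_mono) (auto simp: less_imp_le)
  finally have "sum w I * Min (t ` I) \<le> B"
    using assms(4) by linarith
  moreover have "0 < sum w I"
    using assms by (intro sum_pos) auto
  ultimately show ?thesis
    by (simp add: pos_le_divide_eq mult.commute)
qed

locale accelerated_proximal_point =
  fixes f :: "'a::euclidean_space \<Rightarrow> ereal"
    and xs x0 :: 'a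
    and A a b c :: "nat \<Rightarrow> real"
    and x y z :: "nat \<Rightarrow> 'a"
  assumes closed: "closed_fun f" and proper: "proper_fun f" and convex: "convex_fun f"
    and minimum: "\<And>u. f xs \<le> f u"
    and a_pos: "\<And>k. 0 < a k" and c_pos: "\<And>k. 0 < c k" and b_pos: "\<And>k. 1 \<le> k \<Longrightarrow> 0 < b k"
    and A_eq: "\<And>k. A k = a k * b k"
    and A_Suc_le: "\<And>k. A (Suc k) - A k \<le> a k"
    and a_le_c: "\<And>k. a k \<le> c k"
    and b_0: "b 0 = 0"
    and z_0: "z 0 = x0"
    and y_Suc: "\<And>k. y (Suc k) = (1 / (b k + 1)) *\<^sub>R z k + (b k / (b k + 1)) *\<^sub>R x k"
    and x_Suc: "\<And>k. x (Suc k) = prox (c k / (b k + 1)) f (y (Suc k))"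
    and z_Suc: "\<And>k. z (Suc k) = z k + ((a k / c k) * (b k + 1)) *\<^sub>R (x (Suc k) - y (Suc k))"
begin

definition fmin :: real where
  "fmin = real_of_ereal (f xs)"

definition fval :: "nat \<Rightarrow> real" where
  "fval k = real_of_ereal (f (x k))"

definition step_size :: "nat \<Rightarrow> real" where
  "step_size k = c k / (b k + 1)"

definition grad :: "nat \<Rightarrow> 'a" where
  "grad k = (1 / step_size k) *\<^sub>R (y (Suc k) - x (Suc k))"

text \<open>The value of \<^term>\<open>fval 0\<close> is junk when f x0 is infinite; it is harmless since A 0 = 0.\<close>
definition potential :: "nat \<Rightarrow> real" where
  "potential k = A k * (fval k - fmin) + (norm (z k - xs))\<^sup>2 / 2"

lemma b_nonneg: "0 \<le> b k"
  using b_0 b_pos by (cases k) (auto simp: less_imp_le)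

lemma A_0: "A 0 = 0"
  by (simp add: A_eq b_0)

lemma A_nonneg: "0 \<le> A k"
  unfolding A_eq using a_pos[of k] b_nonneg[of k] by simp

lemma step_size_pos: "0 < step_size k"
  unfolding step_size_def using c_pos[of k] b_nonneg[of k] by simp

lemma f_xs: "f xs = ereal fmin"
proof -
  obtain w where "f w \<noteq> \<infinity>"
    using proper unfolding proper_fun_def by blast
  then have "f xs \<noteq> \<infinity>"
    using minimum[of w] by auto
  moreover have "f xs \<noteq> -\<infinity>"
    using proper unfolding proper_fun_def by blast
  ultimately show ?thesis
    unfolding fmin_def by (cases "f xs") auto
qed

lemma prox_minimizer_x_Suc: "prox_minimizer (step_size k) f (y (Suc k)) (x (Suc k))"
proof -
  have "\<exists>p. prox_minimizer (step_size k) f (y (Suc k)) p"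
    using minimum f_xs by (intro prox_minimizer_exists[OF closed _ _ step_size_pos, of fmin xs]) auto
  then show ?thesis
    unfolding x_Suc step_size_def[symmetric] by (rule prox_minimizer_prox)
qed

lemma f_x_Suc: "f (x (Suc k)) = ereal (fval (Suc k))"
proof -
  have "f (x (Suc k)) + ereal ((norm (x (Suc k) - y (Suc k)))\<^sup>2 / (2 * step_size k))
      \<le> ereal (fmin + (norm (xs - y (Suc k)))\<^sup>2 / (2 * step_size k))"
    using prox_minimizer_x_Suc[of k] f_xs unfolding prox_minimizer_def by (metis plus_ereal.simps(1))
  then have "f (x (Suc k)) \<noteq> \<infinity>"
    by auto
  moreover have "f (x (Suc k)) \<noteq> -\<infinity>"
    using minimum[of "x (Suc k)"] f_xs by auto
  ultimately show ?thesis
    unfolding fval_def by (cases "f (x (Suc k))") auto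
qed

lemma fmin_le_fval: "fmin \<le> fval (Suc k)"
  using minimum[of "x (Suc k)"] f_xs f_x_Suc by simp

lemma subgradient_inequality:
  assumes "f u = ereal fu"
  shows "fval (Suc k) + inner (grad k) (u - x (Suc k)) \<le> fu"
  unfolding grad_def
  by (rule prox_minimizer_subgradient[OF convex step_size_pos prox_minimizer_x_Suc f_x_Suc assms])

lemma c_grad_eq_prox_step: "c k *\<^sub>R grad k = (b k + 1) *\<^sub>R (y (Suc k) - x (Suc k))"
  unfolding grad_def step_size_def using c_pos[of k] b_nonneg[of k] by simp

lemma c_grad: "c k *\<^sub>R grad k = z k + b k *\<^sub>R x k - (b k + 1) *\<^sub>R x (Suc k)"
proof -
  have "(b k + 1) *\<^sub>R y (Suc k) = z k + b k *\<^sub>R x k"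
    unfolding y_Suc using b_nonneg[of k] by (simp add: scaleR_add_right)
  then show ?thesis
    unfolding c_grad_eq_prox_step by (simp add: scaleR_diff_right)
qed

lemma z_Suc_grad: "z (Suc k) = z k - a k *\<^sub>R grad k"
proof -
  have "a k *\<^sub>R grad k = (a k / c k) *\<^sub>R (c k *\<^sub>R grad k)"
    using c_pos[of k] by simp
  also have "\<dots> = - (((a k / c k) * (b k + 1)) *\<^sub>R (x (Suc k) - y (Suc k)))"
    unfolding c_grad_eq_prox_step by (simp add: scaleR_diff_right)
  finally show ?thesis
    unfolding z_Suc by simp
qed

lemma potential_decrease: "potential (Suc k) + (a k)\<^sup>2 * (norm (grad k))\<^sup>2 / 2 \<le> potential k"
proof -
  have "fval (Suc k) + inner (grad k) (x k - x (Suc k)) \<le> fval k" if A_pos: "0 < A k"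
  proof -
    obtain j where "k = Suc j"
      using A_pos A_0 by (cases k) auto
    then show ?thesis
      using subgradient_inequality f_x_Suc by simp
  qed
  then show ?thesis
    unfolding potential_def
    by (intro potential_decrease_step[OF a_pos b_nonneg a_le_c A_eq A_Suc_le c_grad z_Suc_grad
          subgradient_inequality[OF f_xs] _ fmin_le_fval])
qed

lemma potential_bound:
  "potential k + (\<Sum>j<k. (a j)\<^sup>2 * (norm (grad j))\<^sup>2 / 2) \<le> (norm (x0 - xs))\<^sup>2 / 2"
  using telescope_decrease[of potential, OF potential_decrease]
  by (simp add: potential_def A_0 z_0)

lemma objective_bound:
  assumes "1 \<le> k"
  shows "f (x k) - f xs \<le> ereal ((norm (x0 - xs))\<^sup>2 / (2 * A k))"
proof -
  obtain j where k: "k = Suc j"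
    using assms by (cases k) auto
  have "0 < A k"
    using A_eq a_pos b_pos assms by simp
  have "A k * (fval k - fmin) \<le> potential k"
    unfolding potential_def by simp
  also have "\<dots> \<le> (norm (x0 - xs))\<^sup>2 / 2"
    using potential_bound[of k] sum_nonneg[of "{..<k}" "\<lambda>j. (a j)\<^sup>2 * (norm (grad j))\<^sup>2 / 2"] by simp
  finally have "fval k - fmin \<le> (norm (x0 - xs))\<^sup>2 / (2 * A k)"
    using \<open>0 < A k\<close> by (simp add: field_simps)
  then show ?thesis
    using f_x_Suc f_xs k by simp
qed

lemma scaled_residual_eq:
  "(1 / c k) *\<^sub>R ((b k + 1) *\<^sub>R x (Suc k) - b k *\<^sub>R x k - z k) = - grad k"
proof -
  have "(b k + 1) *\<^sub>R x (Suc k) - b k *\<^sub>R x k - z k = - (c k *\<^sub>R grad k)"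
    unfolding c_grad by (simp add: algebra_simps)
  then show ?thesis
    using c_pos[of k] by simp
qed

lemma residual_bound:
  "Min ((\<lambda>j. (norm ((1 / c j) *\<^sub>R ((b j + 1) *\<^sub>R x (Suc j) - b j *\<^sub>R x j - z j)))\<^sup>2) ` {..k})
    \<le> (norm (x0 - xs))\<^sup>2 / (\<Sum>j\<le>k. (a j)\<^sup>2)"
proof -
  have "0 \<le> A (Suc k) * (fval (Suc k) - fmin)"
    using A_nonneg fmin_le_fval[of k] by simp
  then have "(\<Sum>j\<le>k. (a j)\<^sup>2 * (norm (grad j))\<^sup>2 / 2) \<le> (norm (x0 - xs))\<^sup>2 / 2"
    using potential_bound[of "Suc k"] zero_le_power2[of "norm (z (Suc k) - xs)"]
    unfolding potential_def lessThan_Suc_atMost by linarith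
  then have "(\<Sum>j\<le>k. (a j)\<^sup>2 * (norm (grad j))\<^sup>2) \<le> (norm (x0 - xs))\<^sup>2"
    by (simp add: sum_divide_distrib[symmetric])
  then show ?thesis
    unfolding scaled_residual_eq norm_minus_cancel
    by (intro Min_image_le_weighted_bound) (auto simp: a_pos less_imp_neq[OF a_pos, symmetric])
qed

end

theorem theorem6:
  fixes f :: "real ^ 'n \<Rightarrow> ereal"
    and xs x0 :: "real ^ 'n"
    and A a b c :: "nat \<Rightarrow> real"
    and x y z :: "nat \<Rightarrow> real ^ 'n"
  assumes "closed_fun f" and "proper_fun f" and "convex_fun f"
    and "\<forall>u. f xs \<le> f u"
    and "\<forall>k. a k > 0" and "\<forall>k. c k > 0" and "\<forall>k\<ge>1. b k > 0"
    and "\<forall>k. A k = a k * b k"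
    and "\<forall>k. A (Suc k) - A k \<le> a k"
    and "\<forall>k. a k \<le> c k"
    and "A 0 = 0" and "b 0 = 0"
    and "x 0 = x0" and "z 0 = x0"
    and "\<forall>k. y (Suc k) = (1 / (b k + 1)) *\<^sub>R z k + (b k / (b k + 1)) *\<^sub>R x k"
    and "\<forall>k. x (Suc k) = prox (c k / (b k + 1)) f (y (Suc k))"
    and "\<forall>k. z (Suc k) = z k + ((a k / c k) * (b k + 1)) *\<^sub>R (x (Suc k) - y (Suc k))"
  shows "(\<forall>k\<ge>1. f (x k) - f xs \<le> ereal ((norm (x0 - xs))\<^sup>2 / (2 * A k)))
       \<and> (\<forall>k. Min ((\<lambda>j. (norm ((1 / c j) *\<^sub>R ((b j + 1) *\<^sub>R x (Suc j) - b j *\<^sub>R x j - z j)))\<^sup>2) ` {..k})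
               \<le> (norm (x0 - xs))\<^sup>2 / (\<Sum>j\<le>k. (a j)\<^sup>2))"
proof -
  interpret accelerated_proximal_point f xs x0 A a b c x y z
    by unfold_locales (use assms in auto)
  show ?thesis
    using objective_bound residual_bound by blast
qed

end
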